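(* Let $\mathcal{A}\subset\mathbb{R}^d$ be a finite set of pairwise distinct actions, let $A\in\mathbb{R}^{d\times\mathcal{A}}$ be the matrix whose columns are the actions $a\in\mathcal{A}$, let $\Delta^{\mathcal{A}}$ be the probability simplex over $\mathcal{A}$ and $\mathcal{C}=\operatorname{conv}(\mathcal{A})$. Fix a critic $Q:\mathcal{A}\to\mathbb{R}$ with score vector $\gamma_\beta=(Q(a))_{a\in\mathcal{A}}\in\mathbb{R}^{\mathcal{A}}$, a temperature $\tau>0$, a perturbation scale $\varepsilon>0$, and an integer $m\ge 1$. Consider the static actor update of Structured Reinforcement Learning: given $\theta^{(t)}\in\mathbb{R}^d$, (i) draw i.i.d. standard Gaussian vectors $Z_1,\dots,Z_m\in\mathbb{R}^d$ and set $a_i=\arg\max_{a\in\mathcal{A}}(\theta^{(t)}+\varepsilon Z_i)^\top a$; (ii) form the target action $$\widehat a=\sum_{i=1}^m a_i\,\frac{\exp(Q(a_i)/\tau)}{\sum_{j=1}^m\exp(Q(a_j)/\tau)};$$ (iii) take $\theta^{(t+1)}\in\arg\min_{\theta\in\mathbb{R}^d}\mathcal{L}_{\Omega_{\varepsilon,\mathcal{C}}}(\theta;\widehat a)$, where $\mathcal{L}_{\Omega}(\theta;\mu)=\Omega^*(\theta)+\Omega(\mu)-\langle\theta,\mu\rangle$ is the Fenchel-Young loss generated by $\Omega$. Then this update can be written as the sampling-based primal-dual iteration $$(a_i^{(t+\frac12)})_{i\in[m]}\sim_{\text{i.d.}}\nabla\Omega_{\varepsilon,\Delta}^*(A^\top\theta^{(t)}),\qquad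 \hat q_m^{(t+\frac12)}=\frac1m\sum_{i=1}^m\delta_{a_i^{(t+\frac12)}},\qquad \gamma_m^{(t+\frac12)}\in\partial\Omega_\Delta(\hat q_m^{(t+\frac12)}),$$ $$\mu^{(t+1)}=A\,\nabla\Omega_\Delta^*\Big(\gamma_m^{(t+\frac12)}+\tfrac1\tau\gamma_\beta\Big),\qquad \theta^{(t+1)}\in\partial\Omega_{\varepsilon,\mathcal{C}}(\mu^{(t+1)}),$$ in the following sense: sampling $a_i^{(t+\frac12)}$ i.i.d. from the distribution $\nabla\Omega_{\varepsilon,\Delta}^*(A^\top\theta^{(t)})$ is equivalent to step (i); for every choice of $\gamma_m^{(t+\frac12)}\in\partial\Omega_\Delta(\hat q_m^{(t+\frac12)})$ one has $\mu^{(t+1)}=\widehat a$ as in step (ii); and $\theta^{(t+1)}\in\partial\Omega_{\varepsilon,\mathcal{C}}(\mu^{(t+1)})$ holds if and only if $\theta^{(t+1)}$ minimizes $\mathcal{L}_{\Omega_{\varepsilon,\mathcal{C}}}(\cdot\,;\mu^{(t+1)})$ as in step (iii).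
   Context: $\delta_a$ denotes the Dirac distribution on $a$; $\Omega^*$ denotes the Fenchel conjugate, $\nabla$ the gradient and $\partial$ the subdifferential. Negentropy: $\Omega_\Delta(q)=\sum_{a\in\mathcal{A}}q_a\log q_a+\mathbb{I}_{\Delta^{\mathcal{A}}}(q)$, with $\mathbb{I}$ the convex indicator function. For $\gamma\in\mathbb{R}^{\mathcal{A}}$, $\nabla\Omega_\Delta^*(\gamma)=\big(e^{\gamma_a}/\sum_{a'}e^{\gamma_{a'}}\big)_{a\in\mathcal{A}}$. Extension to the boundary: for $\gamma\in(\mathbb{R}\cup\{-\infty\})^{\mathcal{A}}$ with nonempty effective support $\hat{\mathcal{A}}(\gamma)=\{a:\gamma_a>-\infty\}$, $\nabla\Omega_\Delta^*(\gamma)_a=0$ for $a\notin\hat{\mathcal{A}}(\gamma)$ and equals the softmax of the finite components $(\gamma_{a'})_{a'\in\hat{\mathcal{A}}(\gamma)}$ at $a$ otherwise. For $q\in\Delta^{\mathcal{A}}$ with support $\hat{\mathcal{A}}(q)=\{a:q_a>0\}$, $\partial\Omega_\Delta(q)$ is the set of $\gamma\in(\mathbb{R}\cup\{-\infty\})^{\mathcal{A}}$ with $\gamma_a=-\infty$ for $a\notin\hat{\mathcal{A}}(q)$ and $(\gamma_a)_{a\in\hat{\mathcal{A}}(q)}\in\partial\Omega_{\Delta^{\hat{\mathcal{A}}(q)}}(\hat q)$, where $\hat q$ is the restriction of $q$ to its support viewed as an element of the simplex $\Delta^{\hat{\mathcal{A}}(q)}$ and $\Omega_{\Delta^{\hat{\mathcal{A}}(q)}}$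 is the negentropy on that simplex. Sparse perturbation: for $\gamma\in\mathbb{R}^{\mathcal{A}}$, $F_{\varepsilon,\Delta}(\gamma)=\mathbb{E}_Z\big[\max_{a\in\mathcal{A}}\gamma_a+\varepsilon Z^\top a\big]=\mathbb{E}_Z\big[\max_{q\in\Delta^{\mathcal{A}}}(\gamma+\varepsilon A^\top Z)^\top q\big]$ with $Z$ standard Gaussian in $\mathbb{R}^d$, and $\Omega_{\varepsilon,\Delta}:=F_{\varepsilon,\Delta}^*$, so that $\nabla\Omega_{\varepsilon,\Delta}^*(\gamma)=\mathbb{E}_Z\big[\arg\max_{q\in\Delta^{\mathcal{A}}}(\gamma+\varepsilon A^\top Z)^\top q\big]$. The induced regularization on the moment polytope is $\Omega_{\varepsilon,\mathcal{C}}(\mu)=\min_{q\in\Delta^{\mathcal{A}}:\,Aq=\mu}\Omega_{\varepsilon,\Delta}(q)$ for $\mu\in\mathcal{C}$. *)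

theory Defs
  imports "HOL-Probability.Probability"
begin

text \<open>Actions are indexed by a finite type 'a via an injective map act :: 'a => real^'d
  (a finite set of pairwise distinct actions). Vectors in R^A are real^'a.\<close>

definition act_matrix :: "('a::finite \<Rightarrow> real^'d) \<Rightarrow> real^'a^'d" where
  "act_matrix act = (\<chi> i. \<chi> a. act a $ i)"

definition prob_simplex :: "(real^'a::finite) set" where
  "prob_simplex = {q. (\<forall>a. 0 \<le> q $ a) \<and> (\<Sum>a\<in>UNIV. q $ a) = 1}"

definition std_gauss :: "(real^'d::finite) measure" where
  "std_gauss = density lborel (\<lambda>x. ennreal (\<Prod>i\<in>UNIV. std_normal_density (x $ i)))"

definition fconj :: "('v::real_inner \<Rightarrow> ereal) \<Rightarrow> 'v \<Rightarrow> ereal" where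
  "fconj f y = (SUP x. ereal (y \<bullet> x) - f x)"

definition subgrad :: "('v::real_inner \<Rightarrow> ereal) \<Rightarrow> 'v \<Rightarrow> 'v set" where
  "subgrad f x = {g. f x \<noteq> \<infinity> \<and> f x \<noteq> -\<infinity> \<and> (\<forall>y. f y \<ge> f x + ereal (g \<bullet> (y - x)))}"

definition fy_loss :: "('v::real_inner \<Rightarrow> ereal) \<Rightarrow> 'v \<Rightarrow> 'v \<Rightarrow> ereal" where
  "fy_loss \<Omega> \<theta> \<mu> = fconj \<Omega> \<theta> + \<Omega> \<mu> - ereal (\<theta> \<bullet> \<mu>)"

definition F_pert :: "real \<Rightarrow> ('a::finite \<Rightarrow> real^'d::finite) \<Rightarrow> real^'a \<Rightarrow> real" where
  "F_pert \<epsilon> act \<gamma> = (\<integral>z. Max (range (\<lambda>a. \<gamma> $ a + \<epsilon> * (z \<bullet> act a))) \<partial>std_gauss)"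

definition Omega_pert_simplex :: "real \<Rightarrow> ('a::finite \<Rightarrow> real^'d::finite) \<Rightarrow> real^'a \<Rightarrow> ereal" where
  "Omega_pert_simplex \<epsilon> act = fconj (\<lambda>\<gamma>. ereal (F_pert \<epsilon> act \<gamma>))"

text \<open>Induced regularization on the moment polytope (+infinity outside conv A).\<close>
definition Omega_pert_C :: "real \<Rightarrow> ('a::finite \<Rightarrow> real^'d::finite) \<Rightarrow> real^'d \<Rightarrow> ereal" where
  "Omega_pert_C \<epsilon> act \<mu> =
     Inf {Omega_pert_simplex \<epsilon> act q | q. q \<in> prob_simplex \<and> act_matrix act *v q = \<mu>}"

definition xlogx :: "real \<Rightarrow> real" where
  "xlogx x = (if x = 0 then 0 else x * ln x)"

text \<open>Subdifferential of the negentropy on the simplex over a finite set S, at q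
  (a point of that simplex), with the indicator written out.\<close>
definition negent_subgrad_on :: "'a set \<Rightarrow> ('a \<Rightarrow> real) \<Rightarrow> ('a \<Rightarrow> real) set" where
  "negent_subgrad_on S q = {g. \<forall>p. (\<forall>a\<in>S. 0 \<le> p a) \<and> (\<Sum>a\<in>S. p a) = 1 \<longrightarrow>
      (\<Sum>a\<in>S. xlogx (p a)) \<ge> (\<Sum>a\<in>S. xlogx (q a)) + (\<Sum>a\<in>S. g a * (p a - q a))}"

text \<open>Boundary-extended subdifferential of the negentropy Omega_Delta at q in the simplex.\<close>
definition negent_subdiff :: "real^'a::finite \<Rightarrow> ('a \<Rightarrow> ereal) set" where
  "negent_subdiff q = {\<gamma>. (\<forall>a. q $ a = 0 \<longrightarrow> \<gamma> a = -\<infinity>) \<and>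
      (\<forall>a. q $ a > 0 \<longrightarrow> \<gamma> a \<noteq> \<infinity> \<and> \<gamma> a \<noteq> -\<infinity>) \<and>
      (\<lambda>a. real_of_ereal (\<gamma> a)) \<in> negent_subgrad_on {a. q $ a > 0} (\<lambda>a. q $ a)}"

text \<open>Boundary-extended gradient of the conjugate negentropy (softmax on the effective support).\<close>
definition softmax_ext :: "('a::finite \<Rightarrow> ereal) \<Rightarrow> real^'a" where
  "softmax_ext \<gamma> = (\<chi> a. if \<gamma> a = -\<infinity> then 0 else
      exp (real_of_ereal (\<gamma> a)) / (\<Sum>b\<in>{b. \<gamma> b \<noteq> -\<infinity>}. exp (real_of_ereal (\<gamma> b))))"

end

(*
  The perturbed maximum F(gamma) = E max_a (gamma_a + eps Z.a) is convex, and comparing the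
  winning action of gamma with that of another point y shows that the vector G(gamma) of
  probabilities that each action wins the perturbed argmax is a subgradient of F. Since the
  actions are distinct, ties lie on hyperplanes, which the Gaussian measure does not charge;
  hence G is continuous, F is differentiable with gradient G, and the conjugate of
  Omega_{eps,Delta} = F^* is F again. So sampling from grad Omega^*_{eps,Delta}(A^T theta) =
  G(A^T theta) is taking perturbed argmaxes, independently for independent Z_i.

  A subgradient of the negentropy at the empirical distribution qhat is log qhat plus a constant
  on the support of qhat and -infinity off it, so adding Q/tau and applying the softmax
  reweights qhat by exp(Q/tau); the image of the result under A is the target action ahat.

  Finally ahat lies in conv A, so Omega_{eps,C}(ahat) is finite. Then theta is a subgradient
  there iff the Fenchel-Young loss vanishes; the loss is nonnegative, and at a minimiser its
  gradient A G(A^T theta) - ahat vanishes, which forces the loss to be zero.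
*)
theory Submission
  imports Defs
begin

section \<open>The standard Gaussian measure on vectors\<close>

lemma prod_Basis_vec:
  fixes h :: "real^'d::finite \<Rightarrow> 'b::comm_monoid_mult"
  shows "(\<Prod>b\<in>Basis. h b) = (\<Prod>i\<in>UNIV. h (axis i 1))"
proof -
  have Basis_eq: "(Basis :: (real^'d) set) = range (\<lambda>i. axis i 1)"
    by (auto simp: Basis_vec_def)
  have "inj (\<lambda>i::'d. axis i (1::real))"
    by (simp add: inj_on_def axis_eq_axis)
  then show ?thesis
    unfolding Basis_eq by (simp add: prod.reindex)
qed

lemma nn_integral_lborel_vec_prod:
  fixes f :: "'d::finite \<Rightarrow> real \<Rightarrow> ennreal"
  assumes [measurable]: "\<And>i. f i \<in> borel_measurable borel"
  shows "(\<integral>\<^sup>+x. (\<Prod>i\<in>UNIV. f i (x $ i)) \<partial>(lborel :: (real^'d) measure)) =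
    (\<Prod>i\<in>UNIV. \<integral>\<^sup>+t. f i t \<partial>lborel)"
proof -
  define g where "g b = f (axis_index b)" for b :: "real^'d"
  have "(\<integral>\<^sup>+x. (\<Prod>b\<in>Basis. g b (x \<bullet> b)) \<partial>(lborel :: (real^'d) measure)) =
      (\<Prod>b\<in>Basis. \<integral>\<^sup>+t. g b t \<partial>lborel)"
    by (rule nn_integral_lborel_prod) (auto simp: g_def)
  then show ?thesis
    by (simp add: prod_Basis_vec g_def inner_axis)
qed

lemma sets_std_gauss [simp, measurable_cong]: "sets std_gauss = sets borel"
  by (simp add: std_gauss_def)

lemma space_std_gauss [simp]: "space std_gauss = UNIV"
  by (simp add: std_gauss_def)

lemma nn_integral_std_gauss_prod:
  fixes f :: "'d::finite \<Rightarrow> real \<Rightarrow> real"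
  assumes [measurable]: "\<And>i. f i \<in> borel_measurable borel" and nonneg: "\<And>i t. 0 \<le> f i t"
  shows "(\<integral>\<^sup>+x. ennreal (\<Prod>i\<in>UNIV. f i (x $ i)) \<partial>(std_gauss :: (real^'d) measure)) =
    (\<Prod>i\<in>UNIV. \<integral>\<^sup>+t. ennreal (std_normal_density t * f i t) \<partial>lborel)"
proof -
  have "(\<integral>\<^sup>+x. ennreal (\<Prod>i\<in>UNIV. f i (x $ i)) \<partial>(std_gauss :: (real^'d) measure)) =
      (\<integral>\<^sup>+x. (\<Prod>i\<in>UNIV. ennreal (std_normal_density (x $ i) * f i (x $ i))) \<partial>lborel)"
    unfolding std_gauss_def
    by (subst nn_integral_density)
      (auto intro!: nn_integral_cong simp: ennreal_mult[symmetric] prod_nonneg nonneg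
        prod.distrib[symmetric] prod_ennreal)
  also have "\<dots> = (\<Prod>i\<in>UNIV. \<integral>\<^sup>+t. ennreal (std_normal_density t * f i t) \<partial>lborel)"
    by (rule nn_integral_lborel_vec_prod) measurable
  finally show ?thesis .
qed

lemma prob_space_std_gauss: "prob_space (std_gauss :: (real^'d::finite) measure)"
proof
  have "(\<integral>\<^sup>+t. ennreal (std_normal_density t) \<partial>lborel) = 1"
    by (subst nn_integral_eq_integral) auto
  then have "(\<integral>\<^sup>+x. ennreal (\<Prod>i\<in>UNIV. 1) \<partial>(std_gauss :: (real^'d) measure)) = 1"
    using nn_integral_std_gauss_prod[of "\<lambda>_ _. 1"] by simp
  then show "emeasure (std_gauss :: (real^'d) measure) (space std_gauss) = 1"
    by simp
qed

lemma integrable_std_gauss_component: "integrable std_gauss (\<lambda>x::real^'d::finite. x $ j)"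
proof -
  let ?f = "\<lambda>i t. if i = j then \<bar>t\<bar> else 1"
  have moment: "(\<integral>\<^sup>+t. ennreal (std_normal_density t * \<bar>t\<bar> ^ k) \<partial>lborel) < \<infinity>" for k
    using integrable_std_normal_moment_abs[of k]
    by (simp add: integrable_iff_bounded abs_mult)
  have "(\<integral>\<^sup>+t. ennreal (std_normal_density t * ?f i t) \<partial>lborel) < \<infinity>" for i
    using moment[of 0] moment[of 1] by (cases "i = j") auto
  then have "(\<integral>\<^sup>+x. ennreal (\<Prod>i\<in>UNIV. ?f i (x $ i)) \<partial>(std_gauss :: (real^'d) measure)) < \<infinity>"
    by (subst nn_integral_std_gauss_prod) (auto simp: less_top[symmetric] ennreal_prod_eq_top)
  moreover have "(\<Prod>i\<in>UNIV. ?f i (x $ i)) = \<bar>x $ j\<bar>" for x :: "real^'d"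
    by (subst prod.If_cases) auto
  ultimately show ?thesis
    by (simp add: integrable_iff_bounded)
qed

lemma integrable_std_gauss_inner: "integrable std_gauss (\<lambda>z::real^'d::finite. z \<bullet> v)"
  unfolding inner_vec_def inner_real_def
  by (intro Bochner_Integration.integrable_sum integrable_mult_left integrable_std_gauss_component)

lemma AE_std_gauss_not_hyperplane:
  fixes w :: "real^'d::finite"
  assumes "w \<noteq> 0"
  shows "AE z in std_gauss. w \<bullet> z \<noteq> c"
proof -
  have "{z. w \<bullet> z = c} \<in> null_sets lebesgue"
    using negligible_hyperplane[of w c] assms by (simp add: negligible_iff_null_sets)
  moreover have "{z::real^'d. w \<bullet> z = c} \<in> sets lborel"
    by (simp add: closed_hyperplane)
  ultimately have "AE z in lborel. w \<bullet> z \<noteq> c"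
    by (intro AE_I') (auto simp: null_sets_completion_iff)
  then show ?thesis
    unfolding std_gauss_def by (subst AE_density) (auto elim: eventually_mono)
qed

section \<open>The perturbed maximum and its gradient\<close>

locale gaussian_perturbation =
  fixes \<epsilon> :: real and act :: "'a::finite \<Rightarrow> real^'d::finite"
  assumes eps_pos: "\<epsilon> > 0" and inj_act: "inj act"
begin

abbreviation F :: "real^'a \<Rightarrow> real" where
  "F \<equiv> F_pert \<epsilon> act"

definition score :: "real^'a \<Rightarrow> real^'d \<Rightarrow> 'a \<Rightarrow> real" where
  "score \<gamma> z a = \<gamma> $ a + \<epsilon> * (z \<bullet> act a)"

definition max_score :: "real^'a \<Rightarrow> real^'d \<Rightarrow> real" where
  "max_score \<gamma> z = Max (range (score \<gamma> z))"

definition win_region :: "real^'a \<Rightarrow> 'a \<Rightarrow> (real^'d) set" where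
  "win_region \<gamma> a = {z. \<forall>b. b \<noteq> a \<longrightarrow> score \<gamma> z b < score \<gamma> z a}"

definition win_prob :: "real^'a \<Rightarrow> real^'a" where
  "win_prob \<gamma> = (\<chi> a. measure std_gauss (win_region \<gamma> a))"

lemma F_pert_eq_integral: "F \<gamma> = (\<integral>z. max_score \<gamma> z \<partial>std_gauss)"
  by (simp add: F_pert_def max_score_def score_def)

lemma score_measurable [measurable]: "(\<lambda>z. score \<gamma> z a) \<in> borel_measurable borel"
  unfolding score_def by measurable

lemma max_score_measurable [measurable]: "max_score \<gamma> \<in> borel_measurable borel"
  unfolding max_score_def by (rule borel_measurable_Max) auto

lemma win_region_sets [measurable]: "win_region \<gamma> a \<in> sets borel"
  unfolding win_region_def by measurable

lemma score_le_max_score: "score \<gamma> z a \<le> max_score \<gamma> z"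
  unfolding max_score_def by (rule Max_ge) auto

lemma max_score_attained: "\<exists>a. max_score \<gamma> z = score \<gamma> z a"
proof -
  have "max_score \<gamma> z \<in> range (score \<gamma> z)"
    unfolding max_score_def by (rule Max_in) auto
  then show ?thesis
    by auto
qed

lemma max_score_on_win_region: "z \<in> win_region \<gamma> a \<Longrightarrow> max_score \<gamma> z = score \<gamma> z a"
  unfolding max_score_def win_region_def
  by (intro Max_eqI) (auto intro: less_imp_le)

lemma win_region_unique:
  assumes "z \<in> win_region \<gamma> a" and "z \<in> win_region \<gamma> b"
  shows "a = b"
proof (rule ccontr)
  assume "a \<noteq> b"
  with assms have "score \<gamma> z b < score \<gamma> z a" "score \<gamma> z a < score \<gamma> z b"
    by (auto simp: win_region_def)
  then show False
    by simp
qed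

lemma indicator_win_region:
  "z \<in> win_region \<gamma> a \<Longrightarrow> indicator (win_region \<gamma> b) z = (if b = a then 1 else (0::real))"
  using win_region_unique by (auto split: split_indicator)

lemma ex_win_region_if_inj_score:
  assumes "inj (score \<gamma> z)"
  shows "\<exists>a. z \<in> win_region \<gamma> a"
proof -
  obtain a where a: "max_score \<gamma> z = score \<gamma> z a"
    using max_score_attained by blast
  have "score \<gamma> z b < score \<gamma> z a" if "b \<noteq> a" for b
  proof -
    have "score \<gamma> z b \<noteq> score \<gamma> z a"
      using that by (simp add: inj_eq[OF assms])
    then show ?thesis
      using score_le_max_score[of \<gamma> z b] a by simp
  qed
  then show ?thesis
    unfolding win_region_def by blast
qed

lemma AE_inj_score: "AE z in std_gauss. inj (score \<gamma> z)"
proof -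
  have "AE z in std_gauss. a \<noteq> b \<longrightarrow> score \<gamma> z a \<noteq> score \<gamma> z b" for a b
  proof (cases "a = b")
    case False
    then have "act a - act b \<noteq> 0"
      using inj_act by (auto dest: injD)
    then have "AE z in std_gauss. (act a - act b) \<bullet> z \<noteq> (\<gamma> $ b - \<gamma> $ a) / \<epsilon>"
      by (rule AE_std_gauss_not_hyperplane)
    moreover have "score \<gamma> z a \<noteq> score \<gamma> z b"
      if "(act a - act b) \<bullet> z \<noteq> (\<gamma> $ b - \<gamma> $ a) / \<epsilon>" for z
    proof
      assume "score \<gamma> z a = score \<gamma> z b"
      then have "\<epsilon> * ((act a - act b) \<bullet> z) = \<gamma> $ b - \<gamma> $ a"
        by (simp add: score_def inner_diff_left inner_commute algebra_simps)
      with that eps_pos show False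
        by (simp add: field_simps)
    qed
    ultimately show ?thesis
      by (auto elim: eventually_mono)
  qed simp
  then have "AE z in std_gauss. \<forall>a b. a \<noteq> b \<longrightarrow> score \<gamma> z a \<noteq> score \<gamma> z b"
    by (intro eventually_all_finite)
  then show ?thesis
    by (rule eventually_mono) (auto simp: inj_def)
qed

lemma integrable_score: "integrable std_gauss (\<lambda>z. score \<gamma> z a)"
proof -
  interpret prob_space "std_gauss :: (real^'d) measure"
    by (rule prob_space_std_gauss)
  show ?thesis
    unfolding score_def
    by (intro Bochner_Integration.integrable_add integrable_const integrable_mult_right
        integrable_std_gauss_inner)
qed

lemma integrable_max_score: "integrable std_gauss (max_score \<gamma>)"
proof (rule Bochner_Integration.integrable_bound)
  show "integrable std_gauss (\<lambda>z. \<Sum>a\<in>UNIV. \<bar>score \<gamma> z a\<bar>)"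
    by (intro Bochner_Integration.integrable_sum Bochner_Integration.integrable_abs integrable_score)
  show "AE z in std_gauss. norm (max_score \<gamma> z) \<le> norm (\<Sum>a\<in>UNIV. \<bar>score \<gamma> z a\<bar>)"
  proof (rule AE_I2)
    fix z
    obtain a where "max_score \<gamma> z = score \<gamma> z a"
      using max_score_attained by blast
    then show "norm (max_score \<gamma> z) \<le> norm (\<Sum>a\<in>UNIV. \<bar>score \<gamma> z a\<bar>)"
      using member_le_sum[of a UNIV "\<lambda>a. \<bar>score \<gamma> z a\<bar>"] by simp
  qed
qed simp

lemma win_prob_in_prob_simplex: "win_prob \<gamma> \<in> prob_simplex"
proof -
  interpret G: prob_space "std_gauss :: (real^'d) measure"
    by (rule prob_space_std_gauss)
  have "(\<Sum>a\<in>UNIV. win_prob \<gamma> $ a) = measure std_gauss (\<Union>a. win_region \<gamma> a)"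
    unfolding win_prob_def
    by (subst measure_finite_Union) (auto simp: disjoint_family_on_def dest: win_region_unique)
  also have "\<dots> = measure std_gauss (UNIV :: (real^'d) set)"
  proof (rule measure_eq_AE)
    show "AE z in std_gauss. z \<in> (\<Union>a. win_region \<gamma> a) \<longleftrightarrow> z \<in> UNIV"
      using AE_inj_score[of \<gamma>] by (rule eventually_mono) (auto dest: ex_win_region_if_inj_score)
  qed auto
  finally show ?thesis
    using G.prob_space by (simp add: prob_simplex_def win_prob_def)
qed

text \<open>The pointwise inequality behind the integral: the winner a for \<gamma> satisfies
  y_a - \<gamma>_a = score y z a - max_score \<gamma> z \<le> max_score y z - max_score \<gamma> z.\<close>
lemma F_pert_subgradient: "F \<gamma> + (y - \<gamma>) \<bullet> win_prob \<gamma> \<le> F y"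
proof -
  interpret prob_space "std_gauss :: (real^'d) measure"
    by (rule prob_space_std_gauss)
  let ?gain = "\<lambda>z. \<Sum>a\<in>UNIV. indicator (win_region \<gamma> a) z * (y $ a - \<gamma> $ a)"
  have integrable_indicator: "integrable std_gauss (indicator (win_region \<gamma> a) :: _ \<Rightarrow> real)" for a
    by (intro integrable_real_indicator) (auto simp: emeasure_finite less_top[symmetric])
  have "(y - \<gamma>) \<bullet> win_prob \<gamma> = (\<Sum>a\<in>UNIV. (y $ a - \<gamma> $ a) * measure std_gauss (win_region \<gamma> a))"
    by (simp add: inner_vec_def win_prob_def)
  also have "\<dots> = (\<integral>z. ?gain z \<partial>std_gauss)"
    by (subst Bochner_Integration.integral_sum) (auto simp: integrable_indicator mult.commute)
  also have "\<dots> \<le> (\<integral>z. max_score y z - max_score \<gamma> z \<partial>std_gauss)"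
  proof (rule integral_mono_AE)
    show "AE z in std_gauss. ?gain z \<le> max_score y z - max_score \<gamma> z"
      using AE_inj_score[of \<gamma>]
    proof (rule eventually_mono)
      fix z assume "inj (score \<gamma> z)"
      then obtain a where a: "z \<in> win_region \<gamma> a"
        using ex_win_region_if_inj_score by blast
      have "?gain z = score y z a - score \<gamma> z a"
        by (simp add: indicator_win_region[OF a] score_def if_distrib[of "\<lambda>c. c * _"] cong: if_cong)
      then show "?gain z \<le> max_score y z - max_score \<gamma> z"
        using score_le_max_score[of y z a] max_score_on_win_region[OF a] by simp
    qed
    show "integrable std_gauss ?gain"
      by (intro Bochner_Integration.integrable_sum integrable_mult_left integrable_indicator)
    show "integrable std_gauss (\<lambda>z. max_score y z - max_score \<gamma> z)"
      by (intro Bochner_Integration.integrable_diff integrable_max_score)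
  qed
  also have "\<dots> = F y - F \<gamma>"
    by (simp add: F_pert_eq_integral integrable_max_score)
  finally show ?thesis
    by simp
qed

lemma open_Collect_win_region: "open {\<gamma>. z \<in> win_region \<gamma> a}"
proof -
  have "{\<gamma>. z \<in> win_region \<gamma> a} = (\<Inter>b\<in>-{a}. {\<gamma>. score \<gamma> z b < score \<gamma> z a})"
    by (auto simp: win_region_def)
  moreover have "open {\<gamma>. score \<gamma> z b < score \<gamma> z a}" for b
    unfolding score_def by (intro open_Collect_less continuous_intros)
  ultimately show ?thesis
    by (simp add: open_INT)
qed

lemma win_prob_component_tendsto:
  assumes "X \<longlonglongrightarrow> \<gamma>"
  shows "(\<lambda>n. win_prob (X n) $ a) \<longlonglongrightarrow> win_prob \<gamma> $ a"
proof -
  interpret prob_space "std_gauss :: (real^'d) measure"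
    by (rule prob_space_std_gauss)
  have "(\<lambda>n. \<integral>z. indicator (win_region (X n) a) z \<partial>std_gauss) \<longlonglongrightarrow>
      (\<integral>z. indicator (win_region \<gamma> a) z \<partial>std_gauss :: real)"
  proof (rule integral_dominated_convergence[where w="\<lambda>_. 1"])
    show "AE z in std_gauss.
        (\<lambda>n. indicator (win_region (X n) a) z) \<longlonglongrightarrow> (indicator (win_region \<gamma> a) z :: real)"
      using AE_inj_score[of \<gamma>]
    proof (rule eventually_mono)
      fix z
      assume "inj (score \<gamma> z)"
      then obtain c where c: "z \<in> win_region \<gamma> c"
        using ex_win_region_if_inj_score by blast
      have "eventually (\<lambda>n. X n \<in> {\<gamma>. z \<in> win_region \<gamma> c}) sequentially"
        using open_Collect_win_region c assms by (intro topological_tendstoD) auto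
      moreover have "indicator (win_region \<gamma>' a) z = (indicator (win_region \<gamma> a) z :: real)"
        if "z \<in> win_region \<gamma>' c" for \<gamma>'
        using indicator_win_region[OF that] indicator_win_region[OF c] by simp
      ultimately have "eventually (\<lambda>n. indicator (win_region (X n) a) z =
          (indicator (win_region \<gamma> a) z :: real)) sequentially"
        by (auto elim: eventually_mono)
      then show "(\<lambda>n. indicator (win_region (X n) a) z) \<longlonglongrightarrow> (indicator (win_region \<gamma> a) z :: real)"
        by (rule tendsto_eventually)
    qed
  qed (auto split: split_indicator)
  then show ?thesis
    by (simp add: win_prob_def)
qed

lemma isCont_win_prob: "isCont win_prob \<gamma>"
  unfolding continuous_at
proof (rule vec_tendstoI)
  fix a
  show "((\<lambda>x. win_prob x $ a) \<longlongrightarrow> win_prob \<gamma> $ a) (at \<gamma>)"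
    unfolding tendsto_at_iff_sequentially comp_def
    using win_prob_component_tendsto by blast
qed

lemma F_pert_remainder_bounds:
  "0 \<le> F (\<gamma> + h) - F \<gamma> - h \<bullet> win_prob \<gamma>"
  "F (\<gamma> + h) - F \<gamma> - h \<bullet> win_prob \<gamma> \<le> h \<bullet> (win_prob (\<gamma> + h) - win_prob \<gamma>)"
  using F_pert_subgradient[of \<gamma> "\<gamma> + h"] F_pert_subgradient[of "\<gamma> + h" \<gamma>]
  by (simp_all add: inner_diff_right)

lemma F_pert_has_derivative: "(F has_derivative (\<lambda>h. h \<bullet> win_prob \<gamma>)) (at \<gamma>)"
  unfolding has_derivative_at
proof
  show "bounded_linear (\<lambda>h. h \<bullet> win_prob \<gamma>)"
    by (rule bounded_linear_inner_left)
  have "(\<lambda>h. win_prob (\<gamma> + h) - win_prob \<gamma>) \<midarrow>0\<rightarrow> 0"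
    using LIM_zero[OF LIM_offset_zero[OF isCont_win_prob[unfolded continuous_at]]] .
  then have lim: "(\<lambda>h. norm (win_prob (\<gamma> + h) - win_prob \<gamma>)) \<midarrow>0\<rightarrow> 0"
    by (rule tendsto_norm_zero)
  have bound: "norm (norm (F (\<gamma> + h) - F \<gamma> - h \<bullet> win_prob \<gamma>) / norm h)
      \<le> norm (win_prob (\<gamma> + h) - win_prob \<gamma>)" for h
  proof (cases "h = 0")
    case False
    have "F (\<gamma> + h) - F \<gamma> - h \<bullet> win_prob \<gamma> \<le> norm h * norm (win_prob (\<gamma> + h) - win_prob \<gamma>)"
      using F_pert_remainder_bounds(2) norm_cauchy_schwarz order_trans by blast
    with F_pert_remainder_bounds(1)[of \<gamma> h] False show ?thesis
      by (simp add: divide_le_eq mult.commute)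
  qed simp
  show "(\<lambda>h. norm (F (\<gamma> + h) - F \<gamma> - h \<bullet> win_prob \<gamma>) / norm h) \<midarrow>0\<rightarrow> 0"
    by (rule Lim_null_comparison[OF always_eventually lim]) (rule allI, rule bound)
qed

end

section \<open>Conjugates of the perturbed maximum\<close>

lemma fy_loss_nonneg:
  assumes "f \<mu> = ereal c"
  shows "0 \<le> fy_loss f \<theta> \<mu>"
proof -
  have "ereal (\<theta> \<bullet> \<mu>) - f \<mu> \<le> fconj f \<theta>"
    unfolding fconj_def by (rule SUP_upper) simp
  then show ?thesis
    using assms by (cases "fconj f \<theta>") (auto simp: fy_loss_def)
qed

lemma subgrad_iff_fy_loss_nonpos:
  assumes "f \<mu> = ereal c"
  shows "\<theta> \<in> subgrad f \<mu> \<longleftrightarrow> fy_loss f \<theta> \<mu> \<le> 0"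
proof -
  have pointwise: "ereal (\<theta> \<bullet> y) - f y \<le> ereal (\<theta> \<bullet> \<mu> - c) \<longleftrightarrow> f \<mu> + ereal (\<theta> \<bullet> (y - \<mu>)) \<le> f y"
    for y
    using assms by (cases "f y") (auto simp: inner_diff_right)
  have "fy_loss f \<theta> \<mu> \<le> 0 \<longleftrightarrow> fconj f \<theta> \<le> ereal (\<theta> \<bullet> \<mu> - c)"
    using assms by (cases "fconj f \<theta>") (auto simp: fy_loss_def)
  also have "\<dots> \<longleftrightarrow> (\<forall>y. f \<mu> + ereal (\<theta> \<bullet> (y - \<mu>)) \<le> f y)"
    unfolding fconj_def SUP_le_iff pointwise by simp
  finally show ?thesis
    using assms by (simp add: subgrad_def)
qed

lemma act_matrix_mult_eq_sum: "act_matrix act *v q = (\<Sum>a\<in>UNIV. q $ a *\<^sub>R act a)"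
  by (simp add: vec_eq_iff matrix_vector_mult_def act_matrix_def mult.commute)

lemma vector_act_matrix_component: "(\<theta> v* act_matrix act) $ a = \<theta> \<bullet> act a"
  by (simp add: vector_matrix_mult_def act_matrix_def inner_vec_def mult.commute)

context gaussian_perturbation
begin

abbreviation \<Omega> :: "real^'a \<Rightarrow> ereal" where
  "\<Omega> \<equiv> Omega_pert_simplex \<epsilon> act"

lemma Omega_pert_simplex_ge: "ereal (q \<bullet> \<gamma> - F \<gamma>) \<le> \<Omega> q"
proof -
  have "ereal (q \<bullet> \<gamma>) - ereal (F \<gamma>) \<le> \<Omega> q"
    unfolding Omega_pert_simplex_def fconj_def by (rule SUP_upper) simp
  then show ?thesis
    by simp
qed

lemma Omega_pert_simplex_win_prob: "\<Omega> (win_prob \<gamma>) = ereal (win_prob \<gamma> \<bullet> \<gamma> - F \<gamma>)"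
proof (rule antisym)
  show "\<Omega> (win_prob \<gamma>) \<le> ereal (win_prob \<gamma> \<bullet> \<gamma> - F \<gamma>)"
    unfolding Omega_pert_simplex_def fconj_def
  proof (rule SUP_least)
    fix y
    show "ereal (win_prob \<gamma> \<bullet> y) - ereal (F y) \<le> ereal (win_prob \<gamma> \<bullet> \<gamma> - F \<gamma>)"
      using F_pert_subgradient[of \<gamma> y] by (simp add: inner_diff_left inner_commute)
  qed
qed (rule Omega_pert_simplex_ge)

lemma fconj_Omega_pert_simplex: "fconj \<Omega> \<gamma> = ereal (F \<gamma>)"
proof (rule antisym)
  show "fconj \<Omega> \<gamma> \<le> ereal (F \<gamma>)"
    unfolding fconj_def
  proof (rule SUP_least)
    fix q
    have "ereal (\<gamma> \<bullet> q) - \<Omega> q \<le> ereal (\<gamma> \<bullet> q) - ereal (q \<bullet> \<gamma> - F \<gamma>)"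
      by (rule ereal_minus_mono) (auto intro: Omega_pert_simplex_ge)
    then show "ereal (\<gamma> \<bullet> q) - \<Omega> q \<le> ereal (F \<gamma>)"
      by (simp add: inner_commute)
  qed
  have "ereal (F \<gamma>) = ereal (\<gamma> \<bullet> win_prob \<gamma>) - \<Omega> (win_prob \<gamma>)"
    by (simp add: Omega_pert_simplex_win_prob inner_commute)
  also have "\<dots> \<le> fconj \<Omega> \<gamma>"
    unfolding fconj_def by (rule SUP_upper) simp
  finally show "ereal (F \<gamma>) \<le> fconj \<Omega> \<gamma>" .
qed

lemma F_pert_lower_bound:
  assumes "q \<in> prob_simplex"
  shows "q \<bullet> \<gamma> + (\<Sum>a\<in>UNIV. q $ a * (\<epsilon> * (\<integral>z. z \<bullet> act a \<partial>std_gauss))) \<le> F \<gamma>"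
proof -
  interpret G: prob_space "std_gauss :: (real^'d) measure"
    by (rule prob_space_std_gauss)
  have q: "0 \<le> q $ a" "(\<Sum>a\<in>UNIV. q $ a) = 1" for a
    using assms by (auto simp: prob_simplex_def)
  have integral_score: "(\<integral>z. score \<gamma> z a \<partial>std_gauss) = \<gamma> $ a + \<epsilon> * (\<integral>z. z \<bullet> act a \<partial>std_gauss)" for a
    unfolding score_def using G.prob_space
    by (subst Bochner_Integration.integral_add) (auto intro: integrable_std_gauss_inner)
  have "q \<bullet> \<gamma> + (\<Sum>a\<in>UNIV. q $ a * (\<epsilon> * (\<integral>z. z \<bullet> act a \<partial>std_gauss))) =
      (\<integral>z. (\<Sum>a\<in>UNIV. q $ a * score \<gamma> z a) \<partial>std_gauss)"
    by (subst Bochner_Integration.integral_sum)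
      (auto simp: integrable_score integral_score inner_vec_def algebra_simps sum.distrib)
  also have "\<dots> \<le> (\<integral>z. max_score \<gamma> z \<partial>std_gauss)"
  proof (rule integral_mono)
    show "integrable std_gauss (\<lambda>z. \<Sum>a\<in>UNIV. q $ a * score \<gamma> z a)"
      by (intro Bochner_Integration.integrable_sum integrable_mult_right integrable_score)
    show "integrable std_gauss (max_score \<gamma>)"
      by (rule integrable_max_score)
    fix z
    have "(\<Sum>a\<in>UNIV. q $ a * score \<gamma> z a) \<le> (\<Sum>a\<in>UNIV. q $ a * max_score \<gamma> z)"
      by (intro sum_mono mult_left_mono score_le_max_score q)
    then show "(\<Sum>a\<in>UNIV. q $ a * score \<gamma> z a) \<le> max_score \<gamma> z"
      by (simp add: sum_distrib_right[symmetric] q)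
  qed
  finally show ?thesis
    by (simp add: F_pert_eq_integral)
qed

lemma Omega_pert_simplex_finite:
  assumes "q \<in> prob_simplex"
  shows "\<Omega> q \<noteq> \<infinity>"
proof -
  have "\<Omega> q \<le> ereal (- (\<Sum>a\<in>UNIV. q $ a * (\<epsilon> * (\<integral>z. z \<bullet> act a \<partial>std_gauss))))"
    unfolding Omega_pert_simplex_def fconj_def
    using F_pert_lower_bound[OF assms] by (intro SUP_least) (simp add: algebra_simps)
  then show ?thesis
    by auto
qed

abbreviation \<Omega>\<^sub>C :: "real^'d \<Rightarrow> ereal" where
  "\<Omega>\<^sub>C \<equiv> Omega_pert_C \<epsilon> act"

lemma Omega_pert_C_le:
  "q \<in> prob_simplex \<Longrightarrow> act_matrix act *v q = \<mu> \<Longrightarrow> \<Omega>\<^sub>C \<mu> \<le> \<Omega> q"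
  unfolding Omega_pert_C_def by (rule Inf_lower) blast

lemma Omega_pert_C_ge: "ereal (\<theta> \<bullet> \<mu> - F (\<theta> v* act_matrix act)) \<le> \<Omega>\<^sub>C \<mu>"
  unfolding Omega_pert_C_def
proof (rule Inf_greatest)
  fix x
  assume "x \<in> {\<Omega> q |q. q \<in> prob_simplex \<and> act_matrix act *v q = \<mu>}"
  then obtain q where "x = \<Omega> q" and q: "act_matrix act *v q = \<mu>"
    by blast
  moreover have "q \<bullet> (\<theta> v* act_matrix act) = \<theta> \<bullet> \<mu>"
    using q by (metis inner_commute dot_lmul_matrix)
  ultimately show "ereal (\<theta> \<bullet> \<mu> - F (\<theta> v* act_matrix act)) \<le> x"
    using Omega_pert_simplex_ge[of q "\<theta> v* act_matrix act"] by simp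
qed

lemma Omega_pert_C_finite:
  assumes "q \<in> prob_simplex" and "act_matrix act *v q = \<mu>"
  shows "\<exists>c. \<Omega>\<^sub>C \<mu> = ereal c"
proof -
  have "\<Omega>\<^sub>C \<mu> \<noteq> \<infinity>"
    using Omega_pert_C_le[OF assms] Omega_pert_simplex_finite[OF assms(1)]
    by (metis ereal_infty_less_eq(1))
  moreover have "\<Omega>\<^sub>C \<mu> \<noteq> -\<infinity>"
    using Omega_pert_C_ge[of 0 \<mu>] by auto
  ultimately show ?thesis
    by (cases "\<Omega>\<^sub>C \<mu>") auto
qed

lemma fconj_Omega_pert_C: "fconj \<Omega>\<^sub>C \<theta> = ereal (F (\<theta> v* act_matrix act))"
proof (rule antisym)
  show "fconj \<Omega>\<^sub>C \<theta> \<le> ereal (F (\<theta> v* act_matrix act))"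
    unfolding fconj_def
  proof (rule SUP_least)
    fix \<mu>
    have "ereal (\<theta> \<bullet> \<mu>) - \<Omega>\<^sub>C \<mu> \<le> ereal (\<theta> \<bullet> \<mu>) - ereal (\<theta> \<bullet> \<mu> - F (\<theta> v* act_matrix act))"
      by (rule ereal_minus_mono[OF order_refl Omega_pert_C_ge])
    then show "ereal (\<theta> \<bullet> \<mu>) - \<Omega>\<^sub>C \<mu> \<le> ereal (F (\<theta> v* act_matrix act))"
      by simp
  qed
  define \<gamma> where "\<gamma> = \<theta> v* act_matrix act"
  define \<mu> where "\<mu> = act_matrix act *v win_prob \<gamma>"
  have "\<Omega>\<^sub>C \<mu> \<le> ereal (win_prob \<gamma> \<bullet> \<gamma> - F \<gamma>)"
    using Omega_pert_C_le[OF win_prob_in_prob_simplex \<mu>_def[symmetric]]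
    by (simp add: Omega_pert_simplex_win_prob)
  moreover have "win_prob \<gamma> \<bullet> \<gamma> = \<theta> \<bullet> \<mu>"
    by (simp add: \<gamma>_def \<mu>_def inner_commute dot_lmul_matrix)
  ultimately have "ereal (F \<gamma>) \<le> ereal (\<theta> \<bullet> \<mu>) - \<Omega>\<^sub>C \<mu>"
    by (cases "\<Omega>\<^sub>C \<mu>") auto
  also have "\<dots> \<le> fconj \<Omega>\<^sub>C \<theta>"
    unfolding fconj_def by (rule SUP_upper) simp
  finally show "ereal (F (\<theta> v* act_matrix act)) \<le> fconj \<Omega>\<^sub>C \<theta>"
    by (simp add: \<gamma>_def)
qed

lemma act_matrix_win_prob_if_minimizer:
  assumes "\<forall>\<theta>'. F (\<theta> v* act_matrix act) - \<theta> \<bullet> \<mu> \<le> F (\<theta>' v* act_matrix act) - \<theta>' \<bullet> \<mu>"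
  shows "act_matrix act *v win_prob (\<theta> v* act_matrix act) = \<mu>"
proof -
  let ?g = "win_prob (\<theta> v* act_matrix act)"
  have "linear (\<lambda>\<theta>. \<theta> v* act_matrix act)"
    using matrix_vector_mul_linear[of "transpose (act_matrix act)"] by simp
  then have "((\<lambda>\<theta>. F (\<theta> v* act_matrix act)) has_derivative (\<lambda>h. (h v* act_matrix act) \<bullet> ?g)) (at \<theta>)"
    by (rule has_derivative_compose[OF linear_imp_has_derivative F_pert_has_derivative])
  then have "((\<lambda>\<theta>. F (\<theta> v* act_matrix act) - \<theta> \<bullet> \<mu>) has_derivative
      (\<lambda>h. (h v* act_matrix act) \<bullet> ?g - h \<bullet> \<mu>)) (at \<theta>)"
    by (intro has_derivative_diff has_derivative_inner_left has_derivative_ident)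
  moreover have "eventually (\<lambda>\<theta>'. F (\<theta> v* act_matrix act) - \<theta> \<bullet> \<mu>
      \<le> F (\<theta>' v* act_matrix act) - \<theta>' \<bullet> \<mu>) (at \<theta>)"
    using assms by (simp add: always_eventually)
  ultimately have derivative_zero: "(\<lambda>h. (h v* act_matrix act) \<bullet> ?g - h \<bullet> \<mu>) = (\<lambda>h. 0)"
    by (rule has_derivative_local_min)
  have "h \<bullet> (act_matrix act *v ?g - \<mu>) = 0" for h
    using fun_cong[OF derivative_zero, of h] by (simp add: dot_lmul_matrix inner_diff_right)
  from this[of "act_matrix act *v ?g - \<mu>"] show ?thesis
    by simp
qed

lemma fy_loss_Omega_pert_C_nonpos_if_minimizer:
  assumes q: "q \<in> prob_simplex" "act_matrix act *v q = \<mu>"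
    and min: "\<forall>\<theta>'. fy_loss \<Omega>\<^sub>C \<theta> \<mu> \<le> fy_loss \<Omega>\<^sub>C \<theta>' \<mu>"
  shows "fy_loss \<Omega>\<^sub>C \<theta> \<mu> \<le> 0"
proof -
  obtain c where c: "\<Omega>\<^sub>C \<mu> = ereal c"
    using Omega_pert_C_finite[OF q] by blast
  have loss: "fy_loss \<Omega>\<^sub>C \<theta>' \<mu> = ereal (F (\<theta>' v* act_matrix act) - \<theta>' \<bullet> \<mu> + c)" for \<theta>'
    by (simp add: fy_loss_def fconj_Omega_pert_C c)
  define \<gamma> where "\<gamma> = \<theta> v* act_matrix act"
  have \<mu>: "act_matrix act *v win_prob \<gamma> = \<mu>"
    unfolding \<gamma>_def using min by (intro act_matrix_win_prob_if_minimizer) (simp add: loss)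
  have "ereal c \<le> \<Omega> (win_prob \<gamma>)"
    using Omega_pert_C_le[OF win_prob_in_prob_simplex \<mu>] by (simp add: c)
  moreover have "win_prob \<gamma> \<bullet> \<gamma> = \<theta> \<bullet> \<mu>"
    by (simp add: \<gamma>_def \<mu>[symmetric] inner_commute dot_lmul_matrix)
  ultimately show ?thesis
    by (simp add: loss Omega_pert_simplex_win_prob \<gamma>_def)
qed

lemma subgrad_Omega_pert_C_iff_fy_loss_minimizer:
  assumes "q \<in> prob_simplex" and "act_matrix act *v q = \<mu>"
  shows "\<theta> \<in> subgrad \<Omega>\<^sub>C \<mu> \<longleftrightarrow> (\<forall>\<theta>'. fy_loss \<Omega>\<^sub>C \<theta> \<mu> \<le> fy_loss \<Omega>\<^sub>C \<theta>' \<mu>)"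
proof -
  obtain c where c: "\<Omega>\<^sub>C \<mu> = ereal c"
    using Omega_pert_C_finite[OF assms] by blast
  show ?thesis
    unfolding subgrad_iff_fy_loss_nonpos[where f = "\<Omega>\<^sub>C", OF c]
    using fy_loss_nonneg[where f = "\<Omega>\<^sub>C", OF c] fy_loss_Omega_pert_C_nonpos_if_minimizer[OF assms]
    by (meson order_trans)
qed

end

section \<open>Softmax of a negentropy subgradient\<close>

lemma xlogx_has_real_derivative:
  assumes "x > 0"
  shows "(xlogx has_real_derivative (ln x + 1)) (at x)"
proof -
  have "((\<lambda>y. y * ln y) has_real_derivative (ln x + 1)) (at x)"
    using assms by (auto intro!: derivative_eq_intros simp: field_simps)
  moreover have "eventually (\<lambda>y. y * ln y = xlogx y) (nhds x)"
    using eventually_nhds_in_open[of "{0<..}" x] assms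
    by (auto elim!: eventually_mono simp: xlogx_def)
  ultimately show ?thesis
    by (simp add: DERIV_cong_ev)
qed

lemma negent_subgrad_on_transfer:
  fixes q g :: "'a \<Rightarrow> real"
  assumes "finite T" and "\<forall>c\<in>T. 0 \<le> q c" and "(\<Sum>c\<in>T. q c) = 1"
    and "g \<in> negent_subgrad_on T q"
    and "a \<in> T" "b \<in> T" "a \<noteq> b" and "0 \<le> q a + t" "0 \<le> q b - t"
  shows "xlogx (q a) + xlogx (q b) + t * (g a - g b) \<le> xlogx (q a + t) + xlogx (q b - t)"
proof -
  define p where "p c = q c + (if c = a then t else 0) - (if c = b then t else 0)" for c
  have p_ab: "p a = q a + t" "p b = q b - t"
    using \<open>a \<noteq> b\<close> by (auto simp: p_def)
  have "\<forall>c\<in>T. 0 \<le> p c"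
    using assms(2,8,9) p_ab by (auto simp: p_def)
  moreover have "(\<Sum>c\<in>T. p c) = 1"
    using assms(1,3,5,6) by (simp add: p_def sum.distrib sum_subtractf)
  ultimately have "(\<Sum>c\<in>T. xlogx (q c)) + (\<Sum>c\<in>T. g c * (p c - q c)) \<le> (\<Sum>c\<in>T. xlogx (p c))"
    using assms(4) unfolding negent_subgrad_on_def by blast
  moreover have "(\<Sum>c\<in>T. g c * (p c - q c)) = t * (g a - g b)"
  proof -
    have "(\<Sum>c\<in>T. g c * (p c - q c)) = (\<Sum>c\<in>T. (if c = a then g c * t else 0) - (if c = b then g c * t else 0))"
      by (rule sum.cong) (auto simp: p_def algebra_simps)
    also have "\<dots> = t * (g a - g b)"
      using assms(1,5,6) by (simp add: sum_subtractf algebra_simps)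
    finally show ?thesis .
  qed
  moreover have "(\<Sum>c\<in>T. xlogx (p c)) = (\<Sum>c\<in>T. xlogx (q c)) +
      (xlogx (q a + t) - xlogx (q a)) + (xlogx (q b - t) - xlogx (q b))"
  proof -
    have "(\<Sum>c\<in>T. xlogx (p c) - xlogx (q c)) = (\<Sum>c\<in>T.
        (if c = a then xlogx (q a + t) - xlogx (q a) else 0) +
        (if c = b then xlogx (q b - t) - xlogx (q b) else 0))"
      by (rule sum.cong) (auto simp: p_def \<open>a \<noteq> b\<close>)
    also have "\<dots> = (xlogx (q a + t) - xlogx (q a)) + (xlogx (q b - t) - xlogx (q b))"
      using assms(1,5,6) by (simp add: sum.distrib)
    finally show ?thesis
      by (simp add: sum_subtractf)
  qed
  ultimately show ?thesis
    by simp
qed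

text \<open>Moving mass t from b to a stays in the simplex for small t, so by the transfer inequality
  t = 0 is a local minimum of \<psi> below, whose derivative there is
  (ln (q a) - g a) - (ln (q b) - g b).\<close>
lemma negent_subgrad_on_log_shift:
  fixes q g :: "'a \<Rightarrow> real"
  assumes "finite T" and pos: "\<forall>c\<in>T. 0 < q c" and "(\<Sum>c\<in>T. q c) = 1"
    and "g \<in> negent_subgrad_on T q" and "a \<in> T" "b \<in> T"
  shows "g a - ln (q a) = g b - ln (q b)"
proof (cases "a = b")
  case False
  define \<psi> where "\<psi> t = xlogx (q a + t) + xlogx (q b - t) - t * (g a - g b)" for t
  have qa: "q a > 0" and qb: "q b > 0"
    using pos \<open>a \<in> T\<close> \<open>b \<in> T\<close> by auto
  have "((\<lambda>t. xlogx (q a + t)) has_real_derivative (ln (q a) + 1) * 1) (at 0)"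
    by (rule DERIV_chain2[where f = xlogx]) (auto intro!: derivative_eq_intros xlogx_has_real_derivative qa)
  moreover have "((\<lambda>t. xlogx (q b - t)) has_real_derivative (ln (q b) + 1) * (-1)) (at 0)"
    by (rule DERIV_chain2[where f = xlogx]) (auto intro!: derivative_eq_intros xlogx_has_real_derivative qb)
  ultimately have "(\<psi> has_real_derivative
      (ln (q a) + 1) * 1 + (ln (q b) + 1) * (-1) - 1 * (g a - g b)) (at 0)"
    unfolding \<psi>_def by (intro DERIV_diff DERIV_add) (auto intro!: derivative_eq_intros)
  moreover have "0 < min (q a) (q b)"
    using qa qb by simp
  moreover have "\<forall>t. \<bar>0 - t\<bar> < min (q a) (q b) \<longrightarrow> \<psi> 0 \<le> \<psi> t"
  proof (intro allI impI)
    fix t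
    assume "\<bar>0 - t\<bar> < min (q a) (q b)"
    then have "0 \<le> q a + t" and "0 \<le> q b - t"
      by auto
    moreover have "\<forall>c\<in>T. 0 \<le> q c"
      using pos by (simp add: less_imp_le)
    ultimately show "\<psi> 0 \<le> \<psi> t"
      using negent_subgrad_on_transfer[of T q g a b t] assms False by (simp add: \<psi>_def)
  qed
  ultimately have "(ln (q a) + 1) * 1 + (ln (q b) + 1) * (-1) - 1 * (g a - g b) = 0"
    by (rule DERIV_local_min)
  then show ?thesis
    by simp
qed simp

lemma negent_subdiff_log_shift:
  assumes q: "q \<in> prob_simplex" and \<gamma>: "\<gamma> \<in> negent_subdiff q"
  obtains C where "\<And>a. \<gamma> a = (if q $ a = 0 then -\<infinity> else ereal (ln (q $ a) + C))"
proof -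
  define T where "T = {a. q $ a > 0}"
  define g where "g a = real_of_ereal (\<gamma> a)" for a
  have q_nonneg: "0 \<le> q $ a" for a
    using q by (simp add: prob_simplex_def)
  have T_iff: "a \<in> T \<longleftrightarrow> q $ a \<noteq> 0" for a
    using q_nonneg[of a] by (auto simp: T_def)
  have "(\<Sum>c\<in>T. q $ c) = (\<Sum>c\<in>UNIV. q $ c)"
    by (rule sum.mono_neutral_left) (auto simp: T_iff)
  then have sum1: "(\<Sum>c\<in>T. q $ c) = 1"
    using q by (simp add: prob_simplex_def)
  then have "T \<noteq> {}"
    by auto
  then obtain a0 where a0: "a0 \<in> T"
    by blast
  have g: "g \<in> negent_subgrad_on T (\<lambda>a. q $ a)"
    using \<gamma> by (simp add: negent_subdiff_def T_def g_def[abs_def])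
  show thesis
  proof (rule that)
    fix a
    show "\<gamma> a = (if q $ a = 0 then -\<infinity> else ereal (ln (q $ a) + (g a0 - ln (q $ a0))))"
    proof (cases "q $ a = 0")
      case True
      then show ?thesis
        using \<gamma> by (simp add: negent_subdiff_def)
    next
      case False
      then have "\<gamma> a \<noteq> \<infinity>" "\<gamma> a \<noteq> -\<infinity>"
        using \<gamma> q_nonneg[of a] by (auto simp: negent_subdiff_def)
      then have "\<gamma> a = ereal (g a)"
        by (cases "\<gamma> a") (simp_all add: g_def)
      moreover have "g a - ln (q $ a) = g a0 - ln (q $ a0)"
        using False by (intro negent_subgrad_on_log_shift[OF _ _ sum1 g _ a0]) (auto simp: T_def less_le q_nonneg)
      ultimately show ?thesis
        using False by simp
    qed
  qed
qed

definition exp_tilt :: "real^'a::finite \<Rightarrow> ('a \<Rightarrow> real) \<Rightarrow> real^'a" where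
  "exp_tilt q w = (\<chi> a. q $ a * exp (w a) / (\<Sum>b\<in>UNIV. q $ b * exp (w b)))"

lemma softmax_ext_add_negent_subdiff:
  assumes q: "q \<in> prob_simplex" and \<gamma>: "\<gamma> \<in> negent_subdiff q"
  shows "softmax_ext (\<lambda>a. \<gamma> a + ereal (w a)) = exp_tilt q w"
proof -
  obtain C where C: "\<And>a. \<gamma> a = (if q $ a = 0 then -\<infinity> else ereal (ln (q $ a) + C))"
    using negent_subdiff_log_shift[OF assms] by blast
  have q_nonneg: "0 \<le> q $ a" for a
    using q by (simp add: prob_simplex_def)
  have exp_eq: "exp (ln (q $ a) + C + w a) = exp C * (q $ a * exp (w a))" if "q $ a \<noteq> 0" for a
    using q_nonneg[of a] that by (simp add: exp_add)
  have support: "{b. \<gamma> b + ereal (w b) \<noteq> -\<infinity>} = {b. q $ b \<noteq> 0}"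
    by (auto simp: C)
  have "(\<Sum>b\<in>{b. q $ b \<noteq> 0}. exp (real_of_ereal (\<gamma> b + ereal (w b)))) =
      (\<Sum>b\<in>{b. q $ b \<noteq> 0}. exp C * (q $ b * exp (w b)))"
    by (rule sum.cong) (auto simp: C exp_eq)
  also have "\<dots> = exp C * (\<Sum>b\<in>UNIV. q $ b * exp (w b))"
    unfolding sum_distrib_left[symmetric] by (intro arg_cong[where f = "(*) _"] sum.mono_neutral_left) auto
  finally have normalizer: "(\<Sum>b\<in>{b. \<gamma> b + ereal (w b) \<noteq> -\<infinity>}. exp (real_of_ereal (\<gamma> b + ereal (w b)))) =
      exp C * (\<Sum>b\<in>UNIV. q $ b * exp (w b))"
    unfolding support .
  show ?thesis
    unfolding softmax_ext_def exp_tilt_def normalizer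
    by (auto simp: vec_eq_iff C exp_eq)
qed

lemma exp_tilt_in_prob_simplex:
  assumes "q \<in> prob_simplex"
  shows "exp_tilt q w \<in> prob_simplex"
proof -
  have q_nonneg: "0 \<le> q $ a" for a
    using assms by (simp add: prob_simplex_def)
  obtain a where "q $ a \<noteq> 0"
    using assms by (force simp: prob_simplex_def)
  then have "0 < (\<Sum>b\<in>UNIV. q $ b * exp (w b))"
    using q_nonneg by (intro sum_pos2[of _ a]) (auto simp: less_le)
  then show ?thesis
    using q_nonneg by (simp add: prob_simplex_def exp_tilt_def sum_divide_distrib[symmetric])
qed

definition empirical_dist :: "nat \<Rightarrow> (nat \<Rightarrow> 'a) \<Rightarrow> real^'a::finite" where
  "empirical_dist m s = (\<chi> a. (1 / real m) * (\<Sum>i=1..m. if s i = a then 1 else 0))"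

lemma sum_empirical_dist_scaleR:
  fixes v :: "'a::finite \<Rightarrow> 'b::real_vector"
  shows "(\<Sum>a\<in>UNIV. empirical_dist m s $ a *\<^sub>R v a) = (1 / real m) *\<^sub>R (\<Sum>i=1..m. v (s i))"
proof -
  have count: "(\<Sum>i=1..m. if s i = a then 1 else 0::real) *\<^sub>R v a =
      (\<Sum>i=1..m. if s i = a then v a else 0)" for a
    unfolding scaleR_sum_left by (rule sum.cong) auto
  have "(\<Sum>a\<in>UNIV. empirical_dist m s $ a *\<^sub>R v a) =
      (1 / real m) *\<^sub>R (\<Sum>a\<in>UNIV. (\<Sum>i=1..m. if s i = a then 1 else 0::real) *\<^sub>R v a)"
    by (simp add: empirical_dist_def scaleR_sum_right)
  also have "\<dots> = (1 / real m) *\<^sub>R (\<Sum>a\<in>UNIV. \<Sum>i=1..m. if s i = a then v a else 0)"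
    by (simp only: count)
  also have "\<dots> = (1 / real m) *\<^sub>R (\<Sum>i=1..m. v (s i))"
    by (subst sum.swap) (simp add: if_distrib cong: if_cong)
  finally show ?thesis .
qed

lemma empirical_dist_in_prob_simplex:
  assumes "m \<ge> 1"
  shows "empirical_dist m s \<in> prob_simplex"
  using sum_empirical_dist_scaleR[of m s "\<lambda>_. 1::real"] assms
  by (simp add: prob_simplex_def empirical_dist_def sum_nonneg)

lemma act_matrix_exp_tilt_empirical_dist:
  assumes "m \<ge> 1"
  shows "act_matrix act *v exp_tilt (empirical_dist m s) w =
    (\<Sum>i=1..m. (exp (w (s i)) / (\<Sum>j=1..m. exp (w (s j)))) *\<^sub>R act (s i))"
proof -
  let ?q = "empirical_dist m s"
  define S where "S = (\<Sum>j=1..m. exp (w (s j)))"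
  have normalizer: "(\<Sum>b\<in>UNIV. ?q $ b * exp (w b)) = S / real m"
    using sum_empirical_dist_scaleR[of m s "\<lambda>b. exp (w b)"] by (simp add: S_def)
  have "act_matrix act *v exp_tilt ?q w = (\<Sum>a\<in>UNIV. ?q $ a *\<^sub>R ((exp (w a) / (S / real m)) *\<^sub>R act a))"
    by (simp add: act_matrix_mult_eq_sum exp_tilt_def normalizer mult.assoc)
  also have "\<dots> = (1 / real m) *\<^sub>R (\<Sum>i=1..m. (exp (w (s i)) / (S / real m)) *\<^sub>R act (s i))"
    by (rule sum_empirical_dist_scaleR)
  also have "\<dots> = (\<Sum>i=1..m. (exp (w (s i)) / S) *\<^sub>R act (s i))"
    using assms by (simp add: scaleR_sum_right)
  finally show ?thesis
    by (simp add: S_def)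
qed

section \<open>Sampling the perturbed argmax\<close>

context gaussian_perturbation
begin

lemma score_vector_act_matrix: "score (\<theta> v* act_matrix act) z a = (\<theta> + \<epsilon> *\<^sub>R z) \<bullet> act a"
  by (simp add: score_def vector_act_matrix_component inner_add_left)

lemma ex1_argmax_if_inj_score:
  assumes "inj (score \<gamma> z)"
  shows "\<exists>!a. \<forall>b. score \<gamma> z b \<le> score \<gamma> z a"
proof -
  obtain a where a: "z \<in> win_region \<gamma> a"
    using ex_win_region_if_inj_score[OF assms] by blast
  have max: "\<forall>b. score \<gamma> z b \<le> score \<gamma> z a"
    using score_le_max_score max_score_on_win_region[OF a] by metis
  show ?thesis
  proof (rule ex1I[of _ a])
    fix a'
    assume "\<forall>b. score \<gamma> z b \<le> score \<gamma> z a'"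
    then have "score \<gamma> z a' = score \<gamma> z a"
      using max by (meson antisym)
    then show "a' = a"
      using assms by (simp add: inj_eq)
  qed (fact max)
qed

lemma AE_ex1_argmax:
  assumes "X \<in> measurable M borel" and "distr M borel X = std_gauss"
  shows "AE \<omega> in M. \<exists>!a. \<forall>b. score \<gamma> (X \<omega>) b \<le> score \<gamma> (X \<omega>) a"
proof (rule AE_distrD[OF assms(1)])
  show "AE z in distr M borel X. \<exists>!a. \<forall>b. score \<gamma> z b \<le> score \<gamma> z a"
    unfolding assms(2) using AE_inj_score by (rule eventually_mono) (rule ex1_argmax_if_inj_score)
qed

lemma measure_indep_win_regions:
  assumes "prob_space M" and "finite I" and "I \<noteq> {}"
    and indep: "prob_space.indep_vars M (\<lambda>_. borel) X I"
    and gauss: "\<forall>i\<in>I. distr M borel (X i) = std_gauss"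
  shows "measure M {\<omega>\<in>space M. \<forall>i\<in>I. X i \<omega> \<in> win_region \<gamma> (s i)} = (\<Prod>i\<in>I. win_prob \<gamma> $ s i)"
proof -
  interpret prob_space M
    by fact
  have X: "X i \<in> measurable M borel" if "i \<in> I" for i
    using indep that by (auto simp: indep_vars_def)
  have "measure M {\<omega>\<in>space M. \<forall>i\<in>I. X i \<omega> \<in> win_region \<gamma> (s i)} =
      prob (\<Inter>i\<in>I. X i -` win_region \<gamma> (s i) \<inter> space M)"
    using \<open>I \<noteq> {}\<close> by (intro arg_cong[where f = prob]) blast
  also have "\<dots> = (\<Prod>i\<in>I. prob (X i -` win_region \<gamma> (s i) \<inter> space M))"
    using indep assms(2,3) by (intro indep_varsD_finite) auto
  also have "\<dots> = (\<Prod>i\<in>I. win_prob \<gamma> $ s i)"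
  proof (rule prod.cong[OF refl])
    fix i
    assume i: "i \<in> I"
    have "prob (X i -` win_region \<gamma> (s i) \<inter> space M) = measure (distr M borel (X i)) (win_region \<gamma> (s i))"
      using X[OF i] by (simp add: measure_distr)
    then show "prob (X i -` win_region \<gamma> (s i) \<inter> space M) = win_prob \<gamma> $ s i"
      using gauss i by (simp add: win_prob_def)
  qed
  finally show ?thesis .
qed

lemma perturbed_argmax_sampling:
  assumes "prob_space M" and "finite I" and "I \<noteq> {}"
    and indep: "prob_space.indep_vars M (\<lambda>_. borel) Z I"
    and gauss: "\<forall>i\<in>I. distr M borel (Z i) = std_gauss"
  shows "\<exists>g :: real^'a.
      (\<forall>\<gamma>. fconj \<Omega> \<gamma> \<noteq> \<infinity> \<and> fconj \<Omega> \<gamma> \<noteq> -\<infinity>) \<and>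
      ((\<lambda>\<gamma>. real_of_ereal (fconj \<Omega> \<gamma>)) has_derivative (\<lambda>h. h \<bullet> g)) (at (\<theta> v* act_matrix act)) \<and>
      (AE \<omega> in M. \<forall>i\<in>I. \<exists>!a. \<forall>b. (\<theta> + \<epsilon> *\<^sub>R Z i \<omega>) \<bullet> act b \<le> (\<theta> + \<epsilon> *\<^sub>R Z i \<omega>) \<bullet> act a) \<and>
      (\<forall>s. measure M {\<omega>\<in>space M. \<forall>i\<in>I. \<forall>b. b \<noteq> s i \<longrightarrow>
          (\<theta> + \<epsilon> *\<^sub>R Z i \<omega>) \<bullet> act b < (\<theta> + \<epsilon> *\<^sub>R Z i \<omega>) \<bullet> act (s i)}
        = (\<Prod>i\<in>I. g $ s i))"
proof (intro exI[of _ "win_prob (\<theta> v* act_matrix act)"] conjI allI)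
  show "fconj \<Omega> \<gamma> \<noteq> \<infinity>" "fconj \<Omega> \<gamma> \<noteq> -\<infinity>" for \<gamma>
    by (simp_all add: fconj_Omega_pert_simplex)
  show "((\<lambda>\<gamma>. real_of_ereal (fconj \<Omega> \<gamma>)) has_derivative (\<lambda>h. h \<bullet> win_prob (\<theta> v* act_matrix act)))
      (at (\<theta> v* act_matrix act))"
    by (simp add: fconj_Omega_pert_simplex F_pert_has_derivative)
  have Z: "Z i \<in> measurable M borel" if "i \<in> I" for i
    using indep that by (auto simp: prob_space.indep_vars_def[OF \<open>prob_space M\<close>])
  show "AE \<omega> in M. \<forall>i\<in>I. \<exists>!a. \<forall>b. (\<theta> + \<epsilon> *\<^sub>R Z i \<omega>) \<bullet> act b \<le> (\<theta> + \<epsilon> *\<^sub>R Z i \<omega>) \<bullet> act a"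
    using AE_ex1_argmax[OF Z, of _ "\<theta> v* act_matrix act"] gauss \<open>finite I\<close>
    by (intro AE_finite_allI) (simp_all add: score_vector_act_matrix)
  show "measure M {\<omega>\<in>space M. \<forall>i\<in>I. \<forall>b. b \<noteq> s i \<longrightarrow>
      (\<theta> + \<epsilon> *\<^sub>R Z i \<omega>) \<bullet> act b < (\<theta> + \<epsilon> *\<^sub>R Z i \<omega>) \<bullet> act (s i)}
    = (\<Prod>i\<in>I. win_prob (\<theta> v* act_matrix act) $ s i)" for s
    using measure_indep_win_regions[OF assms, of "\<theta> v* act_matrix act" s]
    by (simp add: win_region_def score_vector_act_matrix)
qed

end

theorem proposition1:
  fixes act :: "'a::finite \<Rightarrow> real^'d::finite"
    and Q :: "'a \<Rightarrow> real" and \<tau> \<epsilon> :: real and m :: nat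
    and \<theta> :: "real^'d"
    and M :: "'w measure" and Z :: "nat \<Rightarrow> 'w \<Rightarrow> real^'d"
  assumes inj: "inj act"
    and tau: "\<tau> > 0" and eps: "\<epsilon> > 0" and m: "m \<ge> 1"
    and M: "prob_space M"
    and Z_indep: "prob_space.indep_vars M (\<lambda>_. borel) Z {1..m}"
    and Z_gauss: "\<forall>i\<in>{1..m}. distr M borel (Z i) = std_gauss"
  shows
    \<comment> \<open>(i) sampling i.i.d. from grad Omega*_{eps,Delta}(A^T theta) is step (i)\<close>
    "(\<exists>g :: real^'a.
        (\<forall>\<gamma>. fconj (Omega_pert_simplex \<epsilon> act) \<gamma> \<noteq> \<infinity> \<and>
              fconj (Omega_pert_simplex \<epsilon> act) \<gamma> \<noteq> -\<infinity>) \<and>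
        ((\<lambda>\<gamma>. real_of_ereal (fconj (Omega_pert_simplex \<epsilon> act) \<gamma>)) has_derivative (\<lambda>h. h \<bullet> g))
           (at (transpose (act_matrix act) *v \<theta>)) \<and>
        (AE \<omega> in M. \<forall>i\<in>{1..m}. \<exists>!a. \<forall>b. (\<theta> + \<epsilon> *\<^sub>R Z i \<omega>) \<bullet> act b \<le> (\<theta> + \<epsilon> *\<^sub>R Z i \<omega>) \<bullet> act a) \<and>
        (\<forall>s :: nat \<Rightarrow> 'a.
           measure M {\<omega>\<in>space M. \<forall>i\<in>{1..m}. \<forall>b. b \<noteq> s i \<longrightarrow>
               (\<theta> + \<epsilon> *\<^sub>R Z i \<omega>) \<bullet> act b < (\<theta> + \<epsilon> *\<^sub>R Z i \<omega>) \<bullet> act (s i)}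
           = (\<Prod>i\<in>{1..m}. g $ s i)))
     \<and>
    \<comment> \<open>(ii) for any samples and any subgradient, mu^{(t+1)} is the target action\<close>
     (\<forall>s :: nat \<Rightarrow> 'a.
        let qhat = (\<chi> a. (1 / real m) * (\<Sum>i=1..m. if s i = a then 1 else 0));
            ahat = (\<Sum>i=1..m. (exp (Q (s i) / \<tau>) / (\<Sum>j=1..m. exp (Q (s j) / \<tau>))) *\<^sub>R act (s i))
        in \<forall>\<gamma>\<in>negent_subdiff qhat.
             act_matrix act *v softmax_ext (\<lambda>a. \<gamma> a + ereal (Q a / \<tau>)) = ahat)
     \<and>
    \<comment> \<open>(iii) subgradient condition iff Fenchel-Young loss minimization\<close>
     (\<forall>s :: nat \<Rightarrow> 'a.
        let ahat = (\<Sum>i=1..m. (exp (Q (s i) / \<tau>) / (\<Sum>j=1..m. exp (Q (s j) / \<tau>))) *\<^sub>R act (s i))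
        in \<forall>\<theta>'. \<theta>' \<in> subgrad (Omega_pert_C \<epsilon> act) ahat \<longleftrightarrow>
              (\<forall>\<theta>''. fy_loss (Omega_pert_C \<epsilon> act) \<theta>' ahat \<le> fy_loss (Omega_pert_C \<epsilon> act) \<theta>'' ahat))"
proof -
  interpret gaussian_perturbation \<epsilon> act
    using eps inj by unfold_locales
  have "finite {1..m}" and "{1..m} \<noteq> {}"
    using m by auto
  note sampling = perturbed_argmax_sampling[OF M this Z_indep Z_gauss, of \<theta>]
  note qhat = empirical_dist_in_prob_simplex[OF m]
  note target = act_matrix_exp_tilt_empirical_dist[OF m, where act = act and w = "\<lambda>a. Q a / \<tau>"]
  show ?thesis
    unfolding Let_def empirical_dist_def[symmetric]
    using sampling subgrad_Omega_pert_C_iff_fy_loss_minimizer[OF exp_tilt_in_prob_simplex[OF qhat] target]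
    by (auto simp: softmax_ext_add_negent_subdiff[OF qhat] target)
qed

end
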